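(* Let $G=\langle(123456),(16)(25)(34)\rangle\le S_6$ (the dihedral group of order $12$ acting on the vertices of a hexagon) and $D=\{(4,2),(3^2)\}$. Then $Aut_0(T_{D;G})$ is the trivial group.
   Context: For a partition $\lambda=(\lambda_1\ge\dots\ge\lambda_k>0)$ of $6$, a tabloid of shape $\lambda$ is a sequence $A=(A_1,\dots,A_k)$ of pairwise disjoint subsets of $\{1,\dots,6\}$ with $|A_i|=\lambda_i$; $T_\lambda$ is their set. $S_6$ acts by $\zeta A=(\zeta(A_1),\dots,\zeta(A_k))$. Tabloids are partially ordered by $A\le B$ iff $A_1\cup\dots\cup A_i\subseteq B_1\cup\dots\cup B_i$ for all $i\ge1$ (missing rows empty). $T_{\lambda;G}$ is the set of $G$-orbits in $T_\lambda$ and $T_{D;G}=\bigcup_{\mu\in D}T_{\mu;G}$, ordered by $a\le b$ iff there are $A\in a$, $B\in b$ with $A\le B$. $Aut_0(T_{D;G})$ is the group of bijections $\alpha$ of $T_{D;G}$ with $\alpha(a)\le\alpha(b)\iff a\le b$ and $\alpha(T_{\mu;G})=T_{\mu;G}$ for every $\mu\in D$. *)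

theory Defs
  imports "HOL-Algebra.Sym_Groups" "HOL-Algebra.Generated_Groups"
begin

definition tabloids :: "nat list \<Rightarrow> nat set list set" where
  "tabloids lam = {A. length A = length lam
      \<and> (\<forall>i<length A. A ! i \<subseteq> {1..6} \<and> card (A ! i) = lam ! i)
      \<and> (\<forall>i<length A. \<forall>j<length A. i \<noteq> j \<longrightarrow> A ! i \<inter> A ! j = {})}"

definition act :: "(nat \<Rightarrow> nat) \<Rightarrow> nat set list \<Rightarrow> nat set list" where
  "act z A = map (\<lambda>X. z ` X) A"

definition tab_le :: "nat set list \<Rightarrow> nat set list \<Rightarrow> bool" where
  "tab_le A B \<longleftrightarrow> (\<forall>i\<ge>1. \<Union> (set (take i A)) \<subseteq> \<Union> (set (take i B)))"

definition orbit :: "(nat \<Rightarrow> nat) set \<Rightarrow> nat set list \<Rightarrow> nat set list set" where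
  "orbit G A = {act z A | z. z \<in> G}"

definition orbits :: "nat list \<Rightarrow> (nat \<Rightarrow> nat) set \<Rightarrow> nat set list set set" where
  "orbits lam G = orbit G ` tabloids lam"

definition orbitsD :: "nat list set \<Rightarrow> (nat \<Rightarrow> nat) set \<Rightarrow> nat set list set set" where
  "orbitsD D G = (\<Union>mu\<in>D. orbits mu G)"

definition orb_le :: "nat set list set \<Rightarrow> nat set list set \<Rightarrow> bool" where
  "orb_le a b \<longleftrightarrow> (\<exists>A\<in>a. \<exists>B\<in>b. tab_le A B)"

definition Aut0 :: "nat list set \<Rightarrow> (nat \<Rightarrow> nat) set
    \<Rightarrow> (nat set list set \<Rightarrow> nat set list set) set" where
  "Aut0 D G = {\<alpha>. \<alpha> \<in> extensional (orbitsD D G)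
      \<and> bij_betw \<alpha> (orbitsD D G) (orbitsD D G)
      \<and> (\<forall>a\<in>orbitsD D G. \<forall>b\<in>orbitsD D G. orb_le (\<alpha> a) (\<alpha> b) \<longleftrightarrow> orb_le a b)
      \<and> (\<forall>mu\<in>D. \<alpha> ` orbits mu G = orbits mu G)}"

definition hex_rot :: "nat \<Rightarrow> nat" where
  "hex_rot x = (if 1 \<le> x \<and> x \<le> 5 then x + 1 else if x = 6 then 1 else x)"

definition hex_refl :: "nat \<Rightarrow> nat" where
  "hex_refl x = (if 1 \<le> x \<and> x \<le> 6 then 7 - x else x)"

definition hexG :: "(nat \<Rightarrow> nat) set" where
  "hexG = generate (sym_group 6) {hex_rot, hex_refl}"

end

(*
  G acts on the two-row tabloids [X, {1..6} - X] through its action on the first row, and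
  [X, {1..6} - X] <= [Y, {1..6} - Y] iff X is a subset of Y.  Hence the orbits of shape (4,2)
  are represented by X = {1,2,3,4}, {1,2,3,5}, {1,2,4,5}, those of shape (3,3) by
  X = {1,2,3}, {1,2,4}, {1,3,5}, and a <= b between the orbits of X and Y iff X is contained
  in g Y for some g in G.  In this six-element poset the pairs (number of elements below,
  number of elements above) are (3,1), (4,1), (2,1), (1,3), (1,4), (1,2).  They are pairwise
  distinct and preserved by every order automorphism, so every such automorphism is the
  identity.  The finite checks are evaluated after identifying G with the twelve dihedral
  permutations written in one-line notation.
*)
theory Submission
  imports Defs
begin

section \<open>Orbits of tabloids under permutation groups\<close>

lemma orbit_eq_image: "orbit G A = (\<lambda>z. act z A) ` G"
  by (auto simp: orbit_def)

lemma act_comp: "act (g \<circ> h) A = act g (act h A)"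
  by (simp add: act_def image_comp)

lemma act_id: "act id A = A"
  by (simp add: act_def)

lemma tab_le_act_iff: "inj g \<Longrightarrow> tab_le (act g A) (act g B) \<longleftrightarrow> tab_le A B"
  by (simp add: tab_le_def act_def take_map image_Union[symmetric] inj_image_subset_iff)

lemma sym_subgroup_permutes: "subgroup G (sym_group n) \<Longrightarrow> g \<in> G \<Longrightarrow> g permutes {1..n}"
  using subgroup.subset sym_group_carrier by blast

lemma sym_subgroup_comp_closed:
  "subgroup G (sym_group n) \<Longrightarrow> g \<in> G \<Longrightarrow> h \<in> G \<Longrightarrow> g \<circ> h \<in> G"
  using subgroup.m_closed[of G "sym_group n" g h] by (simp add: sym_group_mult)

lemma sym_subgroup_inv_closed: "subgroup G (sym_group n) \<Longrightarrow> g \<in> G \<Longrightarrow> inv' g \<in> G"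
  using subgroup.m_inv_closed[of G "sym_group n" g] subgroup.mem_carrier[of G "sym_group n" g]
  by simp

lemma sym_subgroup_funpow_closed: "subgroup G (sym_group n) \<Longrightarrow> g \<in> G \<Longrightarrow> g ^^ k \<in> G"
  using subgroup.one_closed[of G "sym_group n"]
  by (induction k) (auto simp: sym_subgroup_comp_closed sym_group_one)

lemma orbit_act_eq:
  assumes G: "subgroup G (sym_group n)" and g: "g \<in> G"
  shows "orbit G (act g A) = orbit G A"
proof -
  have "(\<lambda>z. z \<circ> g) ` G = G #>\<^bsub>sym_group n\<^esub> g"
    by (auto simp: r_coset_def sym_group_mult)
  also have "\<dots> = G"
    using subgroup.rcos_const[OF G sym_group_is_group g] .
  finally have shift: "(\<lambda>z. z \<circ> g) ` G = G" .
  have "orbit G (act g A) = (\<lambda>z. act z A) ` ((\<lambda>z. z \<circ> g) ` G)"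
    by (simp only: orbit_eq_image image_image act_comp)
  then show ?thesis
    by (simp only: shift orbit_eq_image)
qed

lemma orb_le_orbit_iff:
  assumes G: "subgroup G (sym_group n)"
  shows "orb_le (orbit G A) (orbit G B) \<longleftrightarrow> (\<exists>g\<in>G. tab_le A (act g B))"
proof
  assume "orb_le (orbit G A) (orbit G B)"
  then obtain z w where zw: "z \<in> G" "w \<in> G" "tab_le (act z A) (act w B)"
    by (auto simp: orb_le_def orbit_eq_image)
  have "act w B = act z (act (inv' z \<circ> w) B)"
    using permutes_inv_o(1)[OF sym_subgroup_permutes[OF G zw(1)]]
    by (simp add: act_comp[symmetric] comp_assoc[symmetric])
  then have "tab_le A (act (inv' z \<circ> w) B)"
    using zw(3) tab_le_act_iff permutes_inj[OF sym_subgroup_permutes[OF G zw(1)]] by metis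
  then show "\<exists>g\<in>G. tab_le A (act g B)"
    using sym_subgroup_comp_closed[OF G sym_subgroup_inv_closed[OF G zw(1)] zw(2)] by blast
next
  assume "\<exists>g\<in>G. tab_le A (act g B)"
  then obtain g where "g \<in> G" "tab_le A (act g B)" ..
  moreover have "A \<in> orbit G A"
    using subgroup.one_closed[OF G] act_id[of A] unfolding orbit_eq_image sym_group_one
    by (metis image_eqI)
  ultimately show "orb_le (orbit G A) (orbit G B)"
    unfolding orb_le_def orbit_eq_image by blast
qed

section \<open>Two-row tabloids\<close>

lemma tab_le_two_rows_iff:
  "tab_le [A1, A2] [B1, B2] \<longleftrightarrow> A1 \<subseteq> B1 \<and> A1 \<union> A2 \<subseteq> B1 \<union> B2"
proof
  assume "tab_le [A1, A2] [B1, B2]"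
  from this[unfolded tab_le_def, rule_format, of 1] this[unfolded tab_le_def, rule_format, of 2]
  show "A1 \<subseteq> B1 \<and> A1 \<union> A2 \<subseteq> B1 \<union> B2"
    by (simp add: numeral_2_eq_2)
next
  assume le: "A1 \<subseteq> B1 \<and> A1 \<union> A2 \<subseteq> B1 \<union> B2"
  show "tab_le [A1, A2] [B1, B2]"
    unfolding tab_le_def
  proof (intro allI impI)
    fix i :: nat assume "1 \<le> i"
    then consider "i = 1" | "2 \<le> i" by linarith
    then show "\<Union> (set (take i [A1, A2])) \<subseteq> \<Union> (set (take i [B1, B2]))"
      using le by cases simp_all
  qed
qed

lemma two_row_tabloid_iff:
  "[X, Y] \<in> tabloids [p, q] \<longleftrightarrow>
     X \<subseteq> {1..6} \<and> Y \<subseteq> {1..6} \<and> card X = p \<and> card Y = q \<and> X \<inter> Y = {}"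
  by (auto simp: tabloids_def numeral_2_eq_2 All_less_Suc Int_commute)

lemma tabloids_two_rows:
  assumes "p + q = 6"
  shows "tabloids [p, q] = {[X, {1..6} - X] | X. X \<subseteq> {1..6} \<and> card X = p}"
proof (intro equalityI subsetI)
  fix T assume T: "T \<in> tabloids [p, q]"
  then obtain X Y where XY: "T = [X, Y]"
    by (auto simp: tabloids_def length_Suc_conv numeral_2_eq_2)
  with T have X: "X \<subseteq> {1..6}" "card X = p" and Y: "Y \<subseteq> {1..6}" "card Y = q"
    and disj: "X \<inter> Y = {}"
    by (simp_all add: two_row_tabloid_iff)
  have "finite X" "finite Y"
    using X Y finite_subset by blast+
  then have "card (X \<union> Y) = card {1..6::nat}"
    using X Y disj assms by (simp add: card_Un_disjoint)
  then have "X \<union> Y = {1..6}"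
    using X Y by (intro card_subset_eq) auto
  with disj have "Y = {1..6} - X" by blast
  with XY X show "T \<in> {[X, {1..6} - X] | X. X \<subseteq> {1..6} \<and> card X = p}" by blast
next
  fix T assume "T \<in> {[X, {1..6} - X] | X. X \<subseteq> {1..6::nat} \<and> card X = p}"
  then obtain X where X: "T = [X, {1..6} - X]" "X \<subseteq> {1..6}" "card X = p" by blast
  then have "card ({1..6} - X) = q"
    using assms by (simp add: card_Diff_subset finite_subset)
  with X show "T \<in> tabloids [p, q]"
    by (simp add: two_row_tabloid_iff)
qed

lemma act_two_rows: "g permutes C \<Longrightarrow> act g [X, C - X] = [g ` X, C - g ` X]"
  by (simp add: act_def image_set_diff permutes_inj permutes_image)

lemma tab_le_two_rows:
  "X \<subseteq> C \<Longrightarrow> Y \<subseteq> C \<Longrightarrow> tab_le [X, C - X] [Y, C - Y] \<longleftrightarrow> X \<subseteq> Y"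
  by (auto simp: tab_le_two_rows_iff)

definition two_row_orbit :: "(nat \<Rightarrow> nat) set \<Rightarrow> nat set \<Rightarrow> nat set list set" where
  "two_row_orbit G X = orbit G [X, {1..6} - X]"

lemma two_row_orbit_image:
  "subgroup G (sym_group 6) \<Longrightarrow> g \<in> G \<Longrightarrow> two_row_orbit G (g ` X) = two_row_orbit G X"
  unfolding two_row_orbit_def
  by (metis act_two_rows orbit_act_eq sym_subgroup_permutes)

lemma two_row_orbit_eqD:
  assumes G: "subgroup G (sym_group n)" and eq: "two_row_orbit G X = two_row_orbit G Y"
  shows "\<exists>g\<in>G. X = g ` Y"
proof -
  have "[X, {1..6} - X] \<in> two_row_orbit G X"
    using subgroup.one_closed[OF G] act_id unfolding two_row_orbit_def orbit_eq_image sym_group_one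
    by (metis image_eqI)
  then have "[X, {1..6} - X] \<in> orbit G [Y, {1..6} - Y]"
    using eq by (simp add: two_row_orbit_def)
  then obtain g where "g \<in> G" "[X, {1..6} - X] = act g [Y, {1..6} - Y]"
    unfolding orbit_eq_image by blast
  then show ?thesis
    by (auto simp: act_def)
qed

lemma orb_le_two_row_orbit_iff:
  assumes G: "subgroup G (sym_group 6)" and "X \<subseteq> {1..6}" "Y \<subseteq> {1..6}"
  shows "orb_le (two_row_orbit G X) (two_row_orbit G Y) \<longleftrightarrow> (\<exists>g\<in>G. X \<subseteq> g ` Y)"
proof -
  have "tab_le [X, {1..6} - X] (act g [Y, {1..6} - Y]) \<longleftrightarrow> X \<subseteq> g ` Y" if "g \<in> G" for g
  proof -
    have "g permutes {1..6}" using sym_subgroup_permutes[OF G that] .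
    moreover from this have "g ` Y \<subseteq> {1..6}"
      using \<open>Y \<subseteq> {1..6}\<close> permutes_image by blast
    ultimately show ?thesis
      using \<open>X \<subseteq> {1..6}\<close> by (simp add: act_two_rows tab_le_two_rows)
  qed
  then show ?thesis
    unfolding two_row_orbit_def orb_le_orbit_iff[OF G] by simp
qed

lemma orbits_two_rows_reps:
  assumes G: "subgroup G (sym_group 6)" and "p + q = 6"
    and reps: "R \<subseteq> {X. X \<subseteq> {1..6} \<and> card X = p}"
    and cover: "\<And>X. X \<subseteq> {1..6} \<Longrightarrow> card X = p \<Longrightarrow>
      \<exists>Y\<in>R. \<exists>g\<in>G. X = g ` Y"
  shows "orbits [p, q] G = two_row_orbit G ` R"
proof -
  have "orbits [p, q] G = two_row_orbit G ` {X. X \<subseteq> {1..6} \<and> card X = p}"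
    unfolding orbits_def tabloids_two_rows[OF \<open>p + q = 6\<close>] two_row_orbit_def
    by (simp add: setcompr_eq_image image_image)
  also have "\<dots> = two_row_orbit G ` R"
  proof
    show "two_row_orbit G ` {X. X \<subseteq> {1..6} \<and> card X = p} \<subseteq> two_row_orbit G ` R"
    proof (rule image_subsetI)
      fix X :: "nat set" assume "X \<in> {X. X \<subseteq> {1..6} \<and> card X = p}"
      then obtain Y g where "Y \<in> R" "g \<in> G" "X = g ` Y"
        using cover by blast
      then show "two_row_orbit G X \<in> two_row_orbit G ` R"
        using two_row_orbit_image[OF G] by simp
    qed
  qed (use reps in blast)
  finally show ?thesis .
qed

section \<open>Posets whose elements are determined by their up- and down-counts\<close>

lemma card_below_order_automorphism:
  assumes bij: "bij_betw \<alpha> P P"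
    and iso: "\<And>a b. a \<in> P \<Longrightarrow> b \<in> P \<Longrightarrow> R (\<alpha> a) (\<alpha> b) \<longleftrightarrow> R a b"
    and a: "a \<in> P"
  shows "card {b\<in>P. R b (\<alpha> a)} = card {b\<in>P. R b a}"
proof -
  have img: "\<alpha> ` {b\<in>P. R b a} = {b\<in>P. R b (\<alpha> a)}"
  proof (intro equalityI subsetI)
    fix c assume "c \<in> \<alpha> ` {b\<in>P. R b a}"
    then obtain b where "b \<in> P" "R b a" "c = \<alpha> b" by blast
    then show "c \<in> {b\<in>P. R b (\<alpha> a)}"
      using bij_betw_apply[OF bij] iso a by simp
  next
    fix c assume c: "c \<in> {b\<in>P. R b (\<alpha> a)}"
    then obtain b where "b \<in> P" "c = \<alpha> b"
      using bij_betw_imp_surj_on[OF bij] by blast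
    then show "c \<in> \<alpha> ` {b\<in>P. R b a}"
      using c iso a by simp
  qed
  have "inj_on \<alpha> {b\<in>P. R b a}"
    using bij_betw_imp_inj_on[OF bij] by (rule inj_on_subset) blast
  from card_image[OF this] show ?thesis
    unfolding img .
qed

lemma order_automorphism_eq_self:
  assumes bij: "bij_betw \<alpha> P P"
    and iso: "\<And>a b. a \<in> P \<Longrightarrow> b \<in> P \<Longrightarrow> R (\<alpha> a) (\<alpha> b) \<longleftrightarrow> R a b"
    and rigid: "inj_on (\<lambda>a. (card {b\<in>P. R b a}, card {b\<in>P. R a b})) P"
    and a: "a \<in> P"
  shows "\<alpha> a = a"
proof (rule inj_onD[OF rigid _ bij_betw_apply[OF bij a] a])
  have "card {b\<in>P. R b (\<alpha> a)} = card {b\<in>P. R b a}"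
    using card_below_order_automorphism[where R = R, OF bij iso a] .
  moreover have "card {b\<in>P. R (\<alpha> a) b} = card {b\<in>P. R a b}"
    using card_below_order_automorphism[of \<alpha> P "\<lambda>x y. R y x", OF bij iso a] .
  ultimately show "(card {b\<in>P. R b (\<alpha> a)}, card {b\<in>P. R (\<alpha> a) b}) =
      (card {b\<in>P. R b a}, card {b\<in>P. R a b})"
    by simp
qed

lemma inj_on_counts_image:
  assumes inj: "inj_on f R"
    and rigid: "inj_on (\<lambda>X. (card {Y\<in>R. Q (f Y) (f X)}, card {Y\<in>R. Q (f X) (f Y)})) R"
  shows "inj_on (\<lambda>a. (card {b\<in>f ` R. Q b a}, card {b\<in>f ` R. Q a b})) (f ` R)"
proof -
  have "card {b\<in>f ` R. P b} = card {Y\<in>R. P (f Y)}" for P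
  proof -
    have "{b\<in>f ` R. P b} = f ` {Y\<in>R. P (f Y)}" by blast
    then show ?thesis
      using inj by (simp add: card_image inj_on_subset)
  qed
  then show ?thesis
    using rigid by (auto simp: inj_on_def)
qed

lemma Aut0_eq_identity:
  assumes rigid: "inj_on (\<lambda>a. (card {b \<in> orbitsD D G. orb_le b a},
                                 card {b \<in> orbitsD D G. orb_le a b})) (orbitsD D G)"
  shows "Aut0 D G = {\<lambda>a\<in>orbitsD D G. a}"
proof (intro equalityI subsetI)
  fix \<alpha> assume "\<alpha> \<in> Aut0 D G"
  then have "\<alpha> \<in> extensional (orbitsD D G)" "bij_betw \<alpha> (orbitsD D G) (orbitsD D G)"
    "\<forall>a\<in>orbitsD D G. \<forall>b\<in>orbitsD D G. orb_le (\<alpha> a) (\<alpha> b) \<longleftrightarrow> orb_le a b"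
    by (simp_all add: Aut0_def)
  then have "\<alpha> = (\<lambda>a\<in>orbitsD D G. a)"
    using order_automorphism_eq_self[OF _ _ rigid] by (intro extensionalityI) auto
  then show "\<alpha> \<in> {\<lambda>a\<in>orbitsD D G. a}" by simp
next
  fix \<alpha> assume "\<alpha> \<in> {\<lambda>a\<in>orbitsD D G. a}"
  then have \<alpha>: "\<alpha> = restrict id (orbitsD D G)"
    by (simp add: id_def)
  have "\<alpha> ` orbits mu G = orbits mu G" if "mu \<in> D" for mu
  proof -
    have "orbits mu G \<subseteq> orbitsD D G"
      using that by (auto simp: orbitsD_def)
    then show ?thesis
      unfolding \<alpha> by auto
  qed
  then show "\<alpha> \<in> Aut0 D G"
    unfolding Aut0_def by (simp add: \<alpha>)
qed

section \<open>Permutations in one-line notation\<close>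

definition one_line :: "nat list \<Rightarrow> nat \<Rightarrow> nat" where
  "one_line xs x = (if 1 \<le> x \<and> x \<le> length xs then xs ! (x - 1) else x)"

lemma one_line_comp:
  assumes "length xs = length ys"
  shows "one_line xs \<circ> one_line ys = one_line (map (one_line xs) ys)"
proof
  fix x
  show "(one_line xs \<circ> one_line ys) x = one_line (map (one_line xs) ys) x"
  proof (cases "1 \<le> x \<and> x \<le> length ys")
    case True
    then have "x - 1 < length ys" by linarith
    with True show ?thesis by (simp add: one_line_def[of ys] one_line_def[of "map _ _"])
  next
    case False
    with assms show ?thesis by (auto simp: one_line_def)
  qed
qed

lemma one_line_upt: "one_line [1..<n + 1] = id"
  by (rule ext) (simp add: one_line_def del: upt_Suc)

lemma length_funpow_map: "length ((map (f :: 'a \<Rightarrow> 'a) ^^ k) xs) = length xs"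
  by (induction k) simp_all

lemma one_line_funpow:
  "length xs = n \<Longrightarrow> one_line xs ^^ k = one_line ((map (one_line xs) ^^ k) [1..<n + 1])"
proof (induction k)
  case 0
  show ?case by (simp only: funpow.simps(1) id_apply one_line_upt)
next
  case (Suc k)
  then show ?case
    by (simp only: funpow.simps(2) one_line_comp length_funpow_map length_upt comp_apply)
qed

lemma one_line_permutes:
  assumes "distinct xs" "set xs = {1..length xs}"
  shows "one_line xs permutes {1..length xs}"
proof (rule bij_imp_permutes)
  have "one_line xs ` {1..length xs} = (\<lambda>i. xs ! i) ` {0..<length xs}"
    by (force simp: one_line_def image_iff intro: bexI[where x = "Suc _"])
  also have "\<dots> = {1..length xs}"
    using assms(2) by (simp add: set_conv_nth atLeast0LessThan image_def) blast
  finally show "bij_betw (one_line xs) {1..length xs} {1..length xs}"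
    by (simp add: bij_betw_def eq_card_imp_inj_on)
qed (auto simp: one_line_def)

section \<open>The dihedral group of the hexagon\<close>

definition dihedral_words :: "nat list set" where
  "dihedral_words = {[1,2,3,4,5,6], [2,3,4,5,6,1], [3,4,5,6,1,2], [4,5,6,1,2,3],
     [5,6,1,2,3,4], [6,1,2,3,4,5], [6,5,4,3,2,1], [1,6,5,4,3,2], [2,1,6,5,4,3],
     [3,2,1,6,5,4], [4,3,2,1,6,5], [5,4,3,2,1,6]}"

lemma hex_rot_one_line: "hex_rot = one_line [2, 3, 4, 5, 6, 1]"
  by (rule ext) (auto simp: hex_rot_def one_line_def nth_Cons')

lemma hex_refl_one_line: "hex_refl = one_line [6, 5, 4, 3, 2, 1]"
  by (rule ext) (auto simp: hex_refl_def one_line_def nth_Cons')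

lemma one_line_dihedral_words_eq_powers:
  "one_line ` dihedral_words = {hex_rot ^^ k \<circ> hex_refl ^^ e | k e. k < 6 \<and> e < 2}"
proof -
  let ?word = "\<lambda>k e. map (one_line ((map (one_line [2, 3, 4, 5, 6, 1]) ^^ k) [1..<7]))
      ((map (one_line [6, 5, 4, 3, 2, 1]) ^^ e) [1..<7])"
  have "hex_rot ^^ k = one_line ((map (one_line [2, 3, 4, 5, 6, 1]) ^^ k) [1..<7])"
    "hex_refl ^^ e = one_line ((map (one_line [6, 5, 4, 3, 2, 1]) ^^ e) [1..<7])" for k e
    by (simp_all add: hex_rot_one_line hex_refl_one_line one_line_funpow[where n = 6])
  then have word: "one_line (?word k e) = hex_rot ^^ k \<circ> hex_refl ^^ e" for k e
    by (simp add: one_line_comp length_funpow_map)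
  have words: "dihedral_words = (\<lambda>(k, e). ?word k e) ` ({..<6} \<times> {..<2})"
    unfolding dihedral_words_def by code_simp
  show ?thesis
    unfolding words image_image prod.case_distrib[of one_line] word by auto
qed

lemma one_line_dihedral_words_subgroup: "subgroup (one_line ` dihedral_words) (sym_group 6)"
proof (rule group.subgroupI[OF sym_group_is_group])
  have "\<forall>w\<in>dihedral_words. distinct w \<and> set w = {1..length w} \<and> length w = 6"
    unfolding dihedral_words_def by code_simp
  then show carrier: "one_line ` dihedral_words \<subseteq> carrier (sym_group 6)"
    using one_line_permutes by (fastforce simp: sym_group_carrier)
  have closed: "\<forall>v\<in>dihedral_words. \<forall>w\<in>dihedral_words.
      map (one_line v) w \<in> dihedral_words \<and> length v = length w"
    unfolding dihedral_words_def by code_simp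
  show "a \<otimes>\<^bsub>sym_group 6\<^esub> b \<in> one_line ` dihedral_words"
    if "a \<in> one_line ` dihedral_words" "b \<in> one_line ` dihedral_words" for a b
  proof -
    from that obtain v w where vw: "v \<in> dihedral_words" "w \<in> dihedral_words"
        "a = one_line v" "b = one_line w"
      by blast
    moreover note closed[rule_format, OF vw(1,2)]
    ultimately show ?thesis
      by (simp add: sym_group_mult one_line_comp)
  qed
  have inverse: "\<forall>w\<in>dihedral_words. \<exists>v\<in>dihedral_words.
      map (one_line v) w = [1..<6 + 1] \<and> length v = length w"
    unfolding dihedral_words_def by code_simp
  then show "inv\<^bsub>sym_group 6\<^esub> a \<in> one_line ` dihedral_words"
    if "a \<in> one_line ` dihedral_words" for a
  proof -
    from that obtain w where w: "w \<in> dihedral_words" "a = one_line w" by blast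
    with inverse obtain v where v: "v \<in> dihedral_words" "one_line v \<circ> a = id"
      using one_line_comp one_line_upt[of 6] by fastforce
    then have "inv\<^bsub>sym_group 6\<^esub> a = one_line v"
      using carrier that
      by (intro group.inv_equality[OF sym_group_is_group]) (auto simp: sym_group_mult sym_group_one)
    with v show ?thesis by blast
  qed
qed (simp add: dihedral_words_def)

lemma hex_generators_in_dihedral_words: "{hex_rot, hex_refl} \<subseteq> one_line ` dihedral_words"
  by (auto simp: hex_rot_one_line hex_refl_one_line dihedral_words_def)

lemma hexG_subgroup: "subgroup hexG (sym_group 6)"
  unfolding hexG_def
  using hex_generators_in_dihedral_words subgroup.subset[OF one_line_dihedral_words_subgroup]
  by (intro group.generate_is_subgroup sym_group_is_group) blast

lemma hexG_eq_dihedral_words: "hexG = one_line ` dihedral_words"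
proof
  show "hexG \<subseteq> one_line ` dihedral_words"
    unfolding hexG_def using hex_generators_in_dihedral_words
    by (rule group.generate_subgroup_incl[OF sym_group_is_group _ one_line_dihedral_words_subgroup])
next
  have "hex_rot \<in> hexG" "hex_refl \<in> hexG"
    by (auto simp: hexG_def intro: generate.incl)
  then show "one_line ` dihedral_words \<subseteq> hexG"
    unfolding one_line_dihedral_words_eq_powers
    using sym_subgroup_comp_closed[OF hexG_subgroup] sym_subgroup_funpow_closed[OF hexG_subgroup]
    by blast
qed

section \<open>The orbit poset for the shapes (4,2) and (3,3)\<close>

definition hex_reps :: "nat set set" where
  "hex_reps = {{1, 2, 3, 4}, {1, 2, 3, 5}, {1, 2, 4, 5}, {1, 2, 3}, {1, 2, 4}, {1, 3, 5}}"

lemma orbits_4_2_hexG: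
  "orbits [4, 2] hexG = two_row_orbit hexG ` {{1, 2, 3, 4}, {1, 2, 3, 5}, {1, 2, 4, 5}}"
proof (rule orbits_two_rows_reps[OF hexG_subgroup])
  have "\<forall>X\<in>Pow {1..6}. card X = 4 \<longrightarrow>
      (\<exists>Y\<in>{{1, 2, 3, 4}, {1, 2, 3, 5}, {1, 2, 4, 5}}. \<exists>w\<in>dihedral_words. X = one_line w ` Y)"
    unfolding dihedral_words_def by code_simp
  then show "\<exists>Y\<in>{{1, 2, 3, 4}, {1, 2, 3, 5}, {1, 2, 4, 5}}. \<exists>g\<in>hexG. X = g ` Y"
    if "X \<subseteq> {1..6}" "card X = 4" for X
    using that unfolding hexG_eq_dihedral_words by blast
qed auto

lemma orbits_3_3_hexG:
  "orbits [3, 3] hexG = two_row_orbit hexG ` {{1, 2, 3}, {1, 2, 4}, {1, 3, 5}}"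
proof (rule orbits_two_rows_reps[OF hexG_subgroup])
  have "\<forall>X\<in>Pow {1..6}. card X = 3 \<longrightarrow>
      (\<exists>Y\<in>{{1, 2, 3}, {1, 2, 4}, {1, 3, 5}}. \<exists>w\<in>dihedral_words. X = one_line w ` Y)"
    unfolding dihedral_words_def by code_simp
  then show "\<exists>Y\<in>{{1, 2, 3}, {1, 2, 4}, {1, 3, 5}}. \<exists>g\<in>hexG. X = g ` Y"
    if "X \<subseteq> {1..6}" "card X = 3" for X
    using that unfolding hexG_eq_dihedral_words by blast
qed auto

lemma orbitsD_hexG: "orbitsD {[4, 2], [3, 3]} hexG = two_row_orbit hexG ` hex_reps"
  by (simp add: orbitsD_def hex_reps_def orbits_4_2_hexG orbits_3_3_hexG) blast

lemma orb_le_hex_reps: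
  assumes "X \<in> hex_reps" "Y \<in> hex_reps"
  shows "orb_le (two_row_orbit hexG X) (two_row_orbit hexG Y) \<longleftrightarrow>
    (\<exists>w\<in>dihedral_words. X \<subseteq> one_line w ` Y)"
proof -
  have "X \<subseteq> {1..6}" "Y \<subseteq> {1..6}"
    using assms by (auto simp: hex_reps_def)
  then have "orb_le (two_row_orbit hexG X) (two_row_orbit hexG Y) \<longleftrightarrow>
      (\<exists>g\<in>hexG. X \<subseteq> g ` Y)"
    by (rule orb_le_two_row_orbit_iff[OF hexG_subgroup])
  then show ?thesis
    unfolding hexG_eq_dihedral_words by blast
qed

lemma inj_on_two_row_orbit_hex_reps: "inj_on (two_row_orbit hexG) hex_reps"
proof (rule inj_onI)
  fix X Y
  assume XY: "X \<in> hex_reps" "Y \<in> hex_reps" "two_row_orbit hexG X = two_row_orbit hexG Y"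
  have "\<forall>X\<in>hex_reps. \<forall>Y\<in>hex_reps.
      (\<exists>w\<in>dihedral_words. X = one_line w ` Y) \<longrightarrow> X = Y"
    unfolding hex_reps_def dihedral_words_def by code_simp
  then show "X = Y"
    using XY two_row_orbit_eqD[OF hexG_subgroup XY(3)] unfolding hexG_eq_dihedral_words by blast
qed

lemma hex_reps_counts_inj:
  "inj_on (\<lambda>X. (card {Y\<in>hex_reps. orb_le (two_row_orbit hexG Y) (two_row_orbit hexG X)},
                 card {Y\<in>hex_reps. orb_le (two_row_orbit hexG X) (two_row_orbit hexG Y)})) hex_reps"
proof -
  have "inj_on (\<lambda>X. (card {Y\<in>hex_reps. \<exists>w\<in>dihedral_words. Y \<subseteq> one_line w ` X},
                     card {Y\<in>hex_reps. \<exists>w\<in>dihedral_words. X \<subseteq> one_line w ` Y})) hex_reps"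
    unfolding hex_reps_def dihedral_words_def inj_on_def by code_simp
  moreover have "{Y\<in>hex_reps. orb_le (two_row_orbit hexG Y) (two_row_orbit hexG X)} =
      {Y\<in>hex_reps. \<exists>w\<in>dihedral_words. Y \<subseteq> one_line w ` X}"
    "{Y\<in>hex_reps. orb_le (two_row_orbit hexG X) (two_row_orbit hexG Y)} =
      {Y\<in>hex_reps. \<exists>w\<in>dihedral_words. X \<subseteq> one_line w ` Y}" if "X \<in> hex_reps" for X
    using orb_le_hex_reps that by blast+
  ultimately show ?thesis
    by (simp add: inj_on_def)
qed

theorem theorem10p2p1:
  shows "Aut0 {[4, 2], [3, 3]} hexG = {(\<lambda>a\<in>orbitsD {[4, 2], [3, 3]} hexG. a)}"
proof (rule Aut0_eq_identity)
  show "inj_on (\<lambda>a. (card {b \<in> orbitsD {[4, 2], [3, 3]} hexG. orb_le b a},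
      card {b \<in> orbitsD {[4, 2], [3, 3]} hexG. orb_le a b})) (orbitsD {[4, 2], [3, 3]} hexG)"
    unfolding orbitsD_hexG
    using inj_on_counts_image[OF inj_on_two_row_orbit_hex_reps hex_reps_counts_inj] .
qed

end
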